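(* Let $P$ be an online minimization problem and $p^r$ an $r$-round input distribution with associated round cost functions $\mathrm{cost}_i$. Assume there are constants $t,s\geq0$ such that for every deterministic $P$-algorithm $D$ without advice, every $i$ and every history $w\in\mathcal{W}_i$, $$\mathbb{E}[\mathrm{cost}_i(D)\mid W_i=w]\geq t,\qquad \mathbb{E}[(\mathrm{cost}_i(D)-t)^2\mid W_i=w]\leq s^2.$$ Then for every algorithm $\mathrm{ALG}$ reading at most $b$ bits of advice and every $\varepsilon>0$, $$\Pr\big[\mathrm{cost}(\mathrm{ALG})\leq (t-\varepsilon)r\big]\leq 2^{\,b-K_{\gamma/(1+\gamma)}\left(\frac{\alpha+\gamma}{1+\gamma}\right)r},$$ where $\gamma=s^2/t^2$ and $\alpha=\varepsilon/t$.
   Context: For $P$-inputs $\sigma_1,\dots,\sigma_r$, $\sigma_1\cdots\sigma_r$ is the input with the initial state of $\sigma_1$ and all requests concatenated. An $r$-round input distribution: finite sets $I_1,\dots,I_r$ of $P$-inputs such that each $\sigma_1\cdots\sigma_r$ ($\sigma_i\in I_i$) is valid; round cost functions $\mathrm{cost}_i$ mapping an output for such an input to a non-negative real; distributions $p_i$ on $I_i$ and product distribution $p^r$. With the input drawn from $p^r$: $X_i$ is the round-$i$ part; $\mathrm{cost}_i(\cdot)$ the round-$i$ cost of the algorithm's output and $\mathrm{cost}(\cdot)=\sum_i\mathrm{cost}_i(\cdot)$; for an algorithm without advice, $W_i=(X_1,\dots,X_{i-1})$ (the history), and $\mathcal{W}_i$ its set of values of positive probability. The probability in the conclusion is over the input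 drawn from $p^r$. $K_y(x)=x\log_2(x/y)+(1-x)\log_2((1-x)/(1-y))$ for $0<y<1$, $x\in[0,1]$ (with $0\log 0=0$).
   Formalization: Each round cost $\mathrm{cost}_i$ depends only on the input of the first i rounds, $\sigma_1\cdots\sigma_i$, and the algorithm's output on it, not on the whole input $\sigma_1\cdots\sigma_r$ and its output. The statement above fails without it. *)

theory Defs
  imports "HOL-Probability.Probability"
begin

text \<open>A P-input is a pair (initial state, list of requests).  A deterministic online
algorithm without advice is a function D such that the answer to the j-th request of
input (s, qs) is D s (take (Suc j) qs): it depends only on the initial state and the
requests revealed so far.\<close>

definition out :: "('s \<Rightarrow> 'q list \<Rightarrow> 'o) \<Rightarrow> ('s \<times> 'q list) \<Rightarrow> 'o list" where
  "out D \<sigma> = map (\<lambda>j. D (fst \<sigma>) (take (Suc j) (snd \<sigma>))) [0..<length (snd \<sigma>)]"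

definition cat_rounds :: "(nat \<Rightarrow> 's \<times> 'q list) \<Rightarrow> nat \<Rightarrow> 's \<times> 'q list" where
  "cat_rounds x k = (fst (x 0), concat (map (\<lambda>i. snd (x i)) [0..<k]))"

text \<open>Round-i cost (rounds numbered 0..r-1) of the output of D on the input x: the round
cost function c i is applied to the input of rounds 0..i and the (online) output on it.\<close>

definition round_cost ::
  "(nat \<Rightarrow> ('s \<times> 'q list) \<Rightarrow> 'o list \<Rightarrow> real) \<Rightarrow> ('s \<Rightarrow> 'q list \<Rightarrow> 'o)
     \<Rightarrow> (nat \<Rightarrow> 's \<times> 'q list) \<Rightarrow> nat \<Rightarrow> real" where
  "round_cost c D x i = c i (cat_rounds x (Suc i)) (out D (cat_rounds x (Suc i)))"

definition input_dist :: "nat \<Rightarrow> (nat \<Rightarrow> ('s \<times> 'q list) pmf) \<Rightarrow> (nat \<Rightarrow> 's \<times> 'q list) pmf" where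
  "input_dist r p = Pi_pmf {..<r} undefined p"

definition K :: "real \<Rightarrow> real \<Rightarrow> real" where
  "K y x = (if x = 0 then 0 else x * log 2 (x / y))
         + (if x = 1 then 0 else (1 - x) * log 2 ((1 - x) / (1 - y)))"

end

theory Submission
  imports Defs "HOL-Real_Asymp.Real_Asymp"
begin

text \<open>Fix a deterministic algorithm and rescale round costs by M = (t^2 + s^2)/t.  A nonnegative
variable with mean at least t and second moment about t at most s^2 has, at every parameter L,
an exponential moment E exp(-L Y/M) no larger than that of the two-point law putting mass
q = s^2/(t^2 + s^2) at 0 and 1 - q at M.  Since this holds conditionally on every history, the
product of the per-round exponentials telescopes through the tower property, and Chernoff's bound
optimised over L yields 2^(-K_q(a) r) for the event of cost at most (t - eps) r, where
a = (eps t + s^2)/(t^2 + s^2).  An algorithm reading b advice bits behaves on every input like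
one of 2^b deterministic algorithms, so a union bound costs the factor 2^b.\<close>

text \<open>The right-hand side is the parabola in v that agrees with exp (- L * v) at v = 0 and
touches it at v = 1.\<close>

lemma exp_neg_mult_le_quadratic:
  fixes L v :: real
  assumes "L \<ge> 0" and "v \<ge> 0"
  shows "exp (- L * v) \<le> 1 - (1 - exp (- L)) * (2 * v - v\<^sup>2) + L * exp (- L) * (v - v\<^sup>2)"
proof -
  define F where "F l = 1 - (1 - exp (- l)) * (2 * v - v\<^sup>2) + l * exp (- l) * (v - v\<^sup>2) - exp (- l * v)"
    for l :: real
  have "F 0 \<le> F L"
  proof (rule DERIV_nonneg_imp_increasing_open[OF \<open>L \<ge> 0\<close>])
    fix l :: real assume "0 < l" "l < L"
    have "(F has_real_derivative
        v * (exp (- l * v) - exp (- l) * (1 + l * (1 - v)))) (at l)"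
      unfolding F_def
      by (rule derivative_eq_intros refl | simp)+ (simp add: algebra_simps power2_eq_square)
    moreover have "exp (- l) * (1 + l * (1 - v)) \<le> exp (- l) * exp (l * (1 - v))"
      by (intro mult_left_mono exp_ge_add_one_self) auto
    then have "0 \<le> v * (exp (- l * v) - exp (- l) * (1 + l * (1 - v)))"
      using \<open>v \<ge> 0\<close> by (intro mult_nonneg_nonneg) (simp_all add: mult_exp_exp algebra_simps)
    ultimately show "\<exists>y. (F has_real_derivative y) (at l) \<and> 0 \<le> y" by blast
  qed (auto simp: F_def intro!: continuous_intros)
  then show ?thesis by (simp add: F_def)
qed

lemma expectation_exp_neg_le_two_point:
  fixes N :: "'a pmf" and Y :: "'a \<Rightarrow> real" and t s L :: real
  assumes "finite (set_pmf N)" and Y_nonneg: "\<And>x. x \<in> set_pmf N \<Longrightarrow> Y x \<ge> 0"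
    and mean: "measure_pmf.expectation N Y \<ge> t"
    and var: "measure_pmf.expectation N (\<lambda>x. (Y x - t)\<^sup>2) \<le> s\<^sup>2"
    and "t > 0" and "L \<ge> 0"
  shows "measure_pmf.expectation N (\<lambda>x. exp (- L * t * Y x / (t\<^sup>2 + s\<^sup>2)))
      \<le> s\<^sup>2 / (t\<^sup>2 + s\<^sup>2) + (1 - s\<^sup>2 / (t\<^sup>2 + s\<^sup>2)) * exp (- L)"
proof -
  define q where "q = s\<^sup>2 / (t\<^sup>2 + s\<^sup>2)"
  define M where "M = (t\<^sup>2 + s\<^sup>2) / t"
  define u where "u = exp (- L)"
  define B where "B = 2 * (u - 1) + L * u"
  define C where "C = 1 - u - L * u"
  define a0 where "a0 = 1 + B * (1 - q) + C * (1 - q)\<^sup>2"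
  define a1 where "a1 = (B + 2 * C * (1 - q)) / M"
  define c where "c = C / M\<^sup>2"
  have D_pos: "t\<^sup>2 + s\<^sup>2 > 0" using \<open>t > 0\<close> by (simp add: add_pos_nonneg)
  have "M > 0" using D_pos \<open>t > 0\<close> by (simp add: M_def)
  have q_nonneg: "q \<ge> 0" by (simp add: q_def)
  have one_minus_q: "1 - q = t / M"
    using D_pos \<open>t > 0\<close> by (simp add: q_def M_def field_simps power2_eq_square)
  have s_over_M: "s\<^sup>2 / M\<^sup>2 = q * (1 - q)"
    using D_pos \<open>t > 0\<close> by (simp add: one_minus_q) (simp add: q_def M_def field_simps power2_eq_square)
  have "u * (1 + L) \<le> u * exp L"
    by (intro mult_left_mono exp_ge_add_one_self) (simp add: u_def)
  then have C_nonneg: "C \<ge> 0" by (simp add: C_def u_def algebra_simps exp_minus_inverse)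
  have "L * u \<ge> 0" using \<open>L \<ge> 0\<close> by (simp add: u_def)
  have "B + 2 * C * (1 - q) = - (L * u) - 2 * (C * q)" by (simp add: B_def C_def algebra_simps)
  also have "\<dots> \<le> 0"
    using mult_nonneg_nonneg[OF C_nonneg q_nonneg] \<open>L * u \<ge> 0\<close> by linarith
  finally have a1_nonpos: "a1 \<le> 0" using \<open>M > 0\<close> by (simp add: a1_def divide_nonpos_pos)
  have c_nonneg: "c \<ge> 0" using C_nonneg by (simp add: c_def)
  have quadratic:
    "exp (- L * t * Y x / (t\<^sup>2 + s\<^sup>2)) \<le> a0 + a1 * (Y x - t) + c * (Y x - t)\<^sup>2"
    if "x \<in> set_pmf N" for x
  proof -
    define V where "V = Y x / M"
    have "V \<ge> 0" using Y_nonneg[OF that] \<open>M > 0\<close> by (simp add: V_def)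
    have "exp (- L * t * Y x / (t\<^sup>2 + s\<^sup>2)) = exp (- L * V)"
      by (simp add: V_def M_def)
    also have "\<dots> \<le> 1 - (1 - u) * (2 * V - V\<^sup>2) + L * u * (V - V\<^sup>2)"
      unfolding u_def by (rule exp_neg_mult_le_quadratic[OF \<open>L \<ge> 0\<close> \<open>V \<ge> 0\<close>])
    also have "\<dots> = a0 + a1 * (Y x - t) + c * (Y x - t)\<^sup>2"
    proof -
      have V_eq: "V = (1 - q) + (Y x - t) / M"
        using one_minus_q \<open>M > 0\<close> by (simp add: V_def field_simps)
      show ?thesis unfolding V_eq
        using \<open>M > 0\<close> by (simp add: a0_def a1_def c_def B_def C_def field_simps power2_eq_square)
    qed
    finally show ?thesis .
  qed
  have integrable: "integrable N f" for f :: "'a \<Rightarrow> real"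
    by (rule integrable_measure_pmf_finite) fact
  have "measure_pmf.expectation N (\<lambda>x. exp (- L * t * Y x / (t\<^sup>2 + s\<^sup>2)))
      \<le> measure_pmf.expectation N (\<lambda>x. a0 + a1 * (Y x - t) + c * (Y x - t)\<^sup>2)"
    by (intro integral_mono_AE integrable AE_pmfI quadratic)
  also have "\<dots> = a0 + a1 * (measure_pmf.expectation N Y - t)
      + c * measure_pmf.expectation N (\<lambda>x. (Y x - t)\<^sup>2)"
    by (simp add: integrable)
  also have "\<dots> \<le> a0 + 0 + c * s\<^sup>2"
    using a1_nonpos mean c_nonneg var by (intro add_mono mult_left_mono mult_nonpos_nonneg) auto
  also have "\<dots> = q + (1 - q) * u"
  proof -
    have "c * s\<^sup>2 = C * q * (1 - q)" using s_over_M by (simp add: c_def times_divide_eq_right[symmetric])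
    then show ?thesis by (simp add: a0_def B_def C_def algebra_simps power2_eq_square)
  qed
  finally show ?thesis by (simp add: q_def u_def)
qed

lemma expectation_cond_pmf_fibres:
  fixes N :: "'a pmf" and f :: "'a \<Rightarrow> real" and \<kappa> :: "'a \<Rightarrow> 'b"
  assumes "finite (set_pmf N)"
  shows "measure_pmf.expectation N f =
    measure_pmf.expectation N (\<lambda>x. measure_pmf.expectation (cond_pmf N {y. \<kappa> y = \<kappa> x}) f)"
proof -
  have "N \<bind> (\<lambda>x. cond_pmf N {y. \<kappa> y = \<kappa> x}) = N"
    by (rule bind_cond_pmf_cancel) (auto intro: arg_cong[where f = "measure N"])
  then have "measure_pmf.expectation N f
      = measure_pmf.expectation (N \<bind> (\<lambda>x. cond_pmf N {y. \<kappa> y = \<kappa> x})) f"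
    by simp
  also have "\<dots> = (\<Sum>x\<in>set_pmf N. pmf N x *\<^sub>R measure_pmf.expectation (cond_pmf N {y. \<kappa> y = \<kappa> x}) f)"
  proof (rule pmf_expectation_bind)
    show "finite (set_pmf (cond_pmf N {y. \<kappa> y = \<kappa> x}))" if "x \<in> set_pmf N" for x
      using that assms by (subst set_cond_pmf) auto
  qed (use assms in auto)
  also have "\<dots> = measure_pmf.expectation N (\<lambda>x. measure_pmf.expectation (cond_pmf N {y. \<kappa> y = \<kappa> x}) f)"
    using assms by (simp add: integral_measure_pmf_real mult.commute)
  finally show ?thesis .
qed

definition adapted :: "(nat \<Rightarrow> (nat \<Rightarrow> 'a) \<Rightarrow> 'b) \<Rightarrow> bool" where
  "adapted Z \<longleftrightarrow> (\<forall>i x y. (\<forall>j\<le>i. x j = y j) \<longrightarrow> Z i x = Z i y)"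

lemma expectation_prod_adapted_le_power:
  fixes N :: "(nat \<Rightarrow> 'a) pmf" and Z :: "nat \<Rightarrow> (nat \<Rightarrow> 'a) \<Rightarrow> real"
  assumes fin: "finite (set_pmf N)" and "adapted Z"
    and Z_nonneg: "\<And>i x. Z i x \<ge> 0" and "\<phi> \<ge> 0"
    and cond_le: "\<And>k x. k < r \<Longrightarrow> x \<in> set_pmf N \<Longrightarrow>
       measure_pmf.expectation (cond_pmf N {y. \<forall>j<k. y j = x j}) (Z k) \<le> \<phi>"
  shows "measure_pmf.expectation N (\<lambda>x. \<Prod>i<r. Z i x) \<le> \<phi> ^ r"
proof -
  have integrable: "integrable N f" for f :: "_ \<Rightarrow> real"
    by (rule integrable_measure_pmf_finite[OF fin])
  have "measure_pmf.expectation N (\<lambda>x. \<Prod>i<k. Z i x) \<le> \<phi> ^ k" if "k \<le> r" for k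
    using that
  proof (induction k)
    case 0
    then show ?case by simp
  next
    case (Suc k)
    define F where "F x = (\<Prod>i<k. Z i x)" for x
    define past where "past x = {y. \<forall>j<k. y j = x j}" for x :: "nat \<Rightarrow> 'a"
    have F_nonneg: "F x \<ge> 0" for x unfolding F_def by (intro prod_nonneg) (simp add: Z_nonneg)
    have F_past: "F y = F x" if "y \<in> past x" for x y
      using that \<open>adapted Z\<close> unfolding F_def past_def adapted_def by (intro prod.cong) auto
    have pull_out: "measure_pmf.expectation (cond_pmf N (past x)) (\<lambda>y. F y * Z k y)
        = F x * measure_pmf.expectation (cond_pmf N (past x)) (Z k)" if "x \<in> set_pmf N" for x
    proof -
      have "set_pmf N \<inter> past x \<noteq> {}" using that by (auto simp: past_def)
      then show ?thesis
        by (subst integral_mult_right_zero[symmetric], intro integral_cong_AE AE_pmfI)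
          (auto simp: F_past)
    qed
    have past_map: "past x = {y. map y [0..<k] = map x [0..<k]}" for x
      by (auto simp: past_def)
    have "measure_pmf.expectation N (\<lambda>x. \<Prod>i<Suc k. Z i x)
        = measure_pmf.expectation N (\<lambda>x. F x * Z k x)"
      by (simp add: F_def mult.commute)
    also have "\<dots> = measure_pmf.expectation N
        (\<lambda>x. measure_pmf.expectation (cond_pmf N (past x)) (\<lambda>y. F y * Z k y))"
      unfolding past_map by (rule expectation_cond_pmf_fibres[OF fin])
    also have "\<dots> = measure_pmf.expectation N
        (\<lambda>x. F x * measure_pmf.expectation (cond_pmf N (past x)) (Z k))"
      by (intro integral_cong_AE AE_pmfI pull_out) auto
    also have "\<dots> \<le> measure_pmf.expectation N (\<lambda>x. F x * \<phi>)"
      using Suc.prems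
      by (intro integral_mono_AE integrable AE_pmfI mult_left_mono F_nonneg) (auto simp: past_def cond_le)
    also have "\<dots> \<le> \<phi> ^ k * \<phi>"
      using Suc \<open>\<phi> \<ge> 0\<close> by (simp add: F_def mult_right_mono)
    finally show ?case by (simp add: mult.commute)
  qed
  then show ?thesis by simp
qed

lemma K_mult_ln_2:
  assumes "0 < x" and "x < 1"
  shows "K y x * ln 2 = x * ln (x / y) + (1 - x) * ln ((1 - x) / (1 - y))"
  using assms by (simp add: K_def log_def distrib_right)

lemma chernoff_bound_le_powr_K:
  fixes q a P :: real
  assumes "0 < q" "q < a" "a \<le> 1"
    and chernoff: "\<And>L. L > 0 \<Longrightarrow> P \<le> (exp (L * (1 - a)) * (q + (1 - q) * exp (- L))) ^ r"
  shows "P \<le> 2 powr (- K q a * real r)"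
proof (cases "a = 1")
  case True
  have "((\<lambda>L. q + (1 - q) * exp (- L)) \<longlongrightarrow> q) at_top" by real_asymp
  then have "((\<lambda>L. (exp (L * (1 - a)) * (q + (1 - q) * exp (- L))) ^ r) \<longlongrightarrow> q ^ r) at_top"
    using True by (simp add: tendsto_power)
  then have "P \<le> q ^ r"
    by (rule tendsto_lowerbound) (auto intro: eventually_mono[OF eventually_gt_at_top[of 0]] chernoff)
  also have "q ^ r = 2 powr (- K q a * real r)"
    using True \<open>0 < q\<close> by (simp add: K_def log_divide powr_powr[symmetric] powr_realpow)
  finally show ?thesis .
next
  case False
  then have "0 < a" "a < 1" using assms by auto
  define L where "L = ln ((1 - q) / (1 - a)) + ln (a / q)"
  have "(1 - q) / (1 - a) > 1" using \<open>q < a\<close> \<open>a < 1\<close> by simp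
  moreover have "a / q > 1" using \<open>0 < q\<close> \<open>q < a\<close> by simp
  ultimately have "L > 0" by (simp add: L_def add_pos_pos)
  have "exp (- L) = q * (1 - a) / ((1 - q) * a)"
    using \<open>0 < q\<close> \<open>q < a\<close> \<open>a < 1\<close> by (simp add: L_def exp_diff exp_minus field_simps)
  then have "q + (1 - q) * exp (- L) = exp (ln (q / a))"
    using \<open>0 < q\<close> \<open>q < a\<close> \<open>a < 1\<close> by (simp add: field_simps)
  then have "exp (L * (1 - a)) * (q + (1 - q) * exp (- L)) = exp (L * (1 - a) + ln (q / a))"
    by (simp add: exp_add)
  also have "L * (1 - a) + ln (q / a) = - K q a * ln 2"
    using \<open>0 < q\<close> \<open>q < a\<close> \<open>a < 1\<close>
    by (simp add: K_mult_ln_2 L_def ln_div algebra_simps)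
  finally have "P \<le> exp (- K q a * ln 2) ^ r"
    using chernoff[OF \<open>L > 0\<close>] by simp
  also have "\<dots> = 2 powr (- K q a * real r)"
    by (simp add: powr_def exp_of_nat_mult[symmetric] mult_ac)
  finally show ?thesis .
qed

lemma prob_sum_adapted_le_powr_K:
  fixes N :: "(nat \<Rightarrow> 'a) pmf" and Y :: "nat \<Rightarrow> (nat \<Rightarrow> 'a) \<Rightarrow> real"
  assumes fin: "finite (set_pmf N)" and "adapted Y" and Y_nonneg: "\<And>i x. Y i x \<ge> 0"
    and mean: "\<And>i x. i < r \<Longrightarrow> x \<in> set_pmf N \<Longrightarrow>
       measure_pmf.expectation (cond_pmf N {y. \<forall>j<i. y j = x j}) (Y i) \<ge> t"
    and var: "\<And>i x. i < r \<Longrightarrow> x \<in> set_pmf N \<Longrightarrow>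
       measure_pmf.expectation (cond_pmf N {y. \<forall>j<i. y j = x j}) (\<lambda>y. (Y i y - t)\<^sup>2) \<le> s\<^sup>2"
    and "t > 0" and "s > 0" and "0 < \<epsilon>" and "\<epsilon> \<le> t"
  shows "measure_pmf.prob N {x. (\<Sum>i<r. Y i x) \<le> (t - \<epsilon>) * real r}
    \<le> 2 powr (- K (s\<^sup>2 / (t\<^sup>2 + s\<^sup>2)) ((\<epsilon> * t + s\<^sup>2) / (t\<^sup>2 + s\<^sup>2)) * real r)"
proof (rule chernoff_bound_le_powr_K)
  define q where "q = s\<^sup>2 / (t\<^sup>2 + s\<^sup>2)"
  define a where "a = (\<epsilon> * t + s\<^sup>2) / (t\<^sup>2 + s\<^sup>2)"
  have D_pos: "t\<^sup>2 + s\<^sup>2 > 0" using \<open>t > 0\<close> by (simp add: add_pos_nonneg)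
  show "0 < q" using \<open>s > 0\<close> D_pos by (simp add: q_def)
  show "q < a" using \<open>0 < \<epsilon>\<close> \<open>t > 0\<close> D_pos by (simp add: q_def a_def divide_strict_right_mono)
  show "a \<le> 1" using \<open>\<epsilon> \<le> t\<close> \<open>t > 0\<close> D_pos by (simp add: a_def power2_eq_square)
  fix L :: real assume "L > 0"
  define Z where "Z i x = exp (- L * t * Y i x / (t\<^sup>2 + s\<^sup>2))" for i x
  have "adapted Z" using \<open>adapted Y\<close> by (simp add: adapted_def Z_def)
  have "measure_pmf.expectation N (\<lambda>x. \<Prod>i<r. Z i x) \<le> (q + (1 - q) * exp (- L)) ^ r"
  proof (rule expectation_prod_adapted_le_power[OF fin \<open>adapted Z\<close>])
    show "q + (1 - q) * exp (- L) \<ge> 0"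
      using \<open>0 < q\<close> \<open>q < a\<close> \<open>a \<le> 1\<close> by (simp add: add_nonneg_nonneg)
    fix k x assume "k < r" and x: "x \<in> set_pmf N"
    have "set_pmf N \<inter> {y. \<forall>j<k. y j = x j} \<noteq> {}" using x by auto
    then show "measure_pmf.expectation (cond_pmf N {y. \<forall>j<k. y j = x j}) (Z k)
        \<le> q + (1 - q) * exp (- L)"
      unfolding Z_def q_def
      using \<open>t > 0\<close> \<open>L > 0\<close> fin mean[OF \<open>k < r\<close> x] var[OF \<open>k < r\<close> x]
      by (intro expectation_exp_neg_le_two_point) (auto simp: Y_nonneg)
  qed (simp add: Z_def)
  moreover have "(\<integral>x\<in>space N. exp (- (L * t / (t\<^sup>2 + s\<^sup>2)) * (\<Sum>i<r. Y i x)) \<partial>N)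
      = measure_pmf.expectation N (\<lambda>x. \<Prod>i<r. Z i x)"
    by (simp add: set_lebesgue_integral_def Z_def exp_sum sum_distrib_left)
  moreover have "exp (L * t / (t\<^sup>2 + s\<^sup>2) * ((t - \<epsilon>) * real r)) = exp (L * (1 - a)) ^ r"
  proof -
    have "1 - a = t * (t - \<epsilon>) / (t\<^sup>2 + s\<^sup>2)"
      using \<open>t > 0\<close> by (simp add: a_def field_simps power2_eq_square)
    then show ?thesis by (simp add: exp_of_nat_mult[symmetric] mult_ac)
  qed
  moreover have "measure_pmf.prob N {x \<in> space N. (\<Sum>i<r. Y i x) \<le> (t - \<epsilon>) * real r}
      \<le> exp (L * t / (t\<^sup>2 + s\<^sup>2) * ((t - \<epsilon>) * real r)) *
         (\<integral>x\<in>space N. exp (- (L * t / (t\<^sup>2 + s\<^sup>2)) * (\<Sum>i<r. Y i x)) \<partial>N)"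
    using \<open>L > 0\<close> \<open>t > 0\<close> D_pos fin
    by (intro measure_pmf.Chernoff_ineq_le)
      (auto simp: set_integrable_def intro: integrable_measure_pmf_finite)
  ultimately show "measure_pmf.prob N {x. (\<Sum>i<r. Y i x) \<le> (t - \<epsilon>) * real r}
      \<le> (exp (L * (1 - a)) * (q + (1 - q) * exp (- L))) ^ r"
    by (auto simp: power_mult_distrib intro: order.trans mult_left_mono)
qed

lemma prob_chosen_event_le_card_mult:
  fixes N :: "'a pmf" and choice :: "'a \<Rightarrow> 'w" and P :: "'w \<Rightarrow> 'a \<Rightarrow> bool"
  assumes "finite W" and "\<And>x. choice x \<in> W"
    and "\<And>w. w \<in> W \<Longrightarrow> measure_pmf.prob N {x. P w x} \<le> B"
  shows "measure_pmf.prob N {x. P (choice x) x} \<le> real (card W) * B"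
proof -
  have "measure_pmf.prob N {x. P (choice x) x} \<le> measure_pmf.prob N (\<Union>w\<in>W. {x. P w x})"
    using assms(2) by (intro measure_pmf.finite_measure_mono) auto
  also have "\<dots> \<le> (\<Sum>w\<in>W. measure_pmf.prob N {x. P w x})"
    using \<open>finite W\<close> by (intro measure_pmf.finite_measure_subadditive_finite) auto
  also have "\<dots> \<le> real (card W) * B"
    using sum_bounded_above[of W "\<lambda>w. measure_pmf.prob N {x. P w x}" B] assms(3) by simp
  finally show ?thesis .
qed

lemma finite_set_pmf_input_dist:
  assumes "\<And>i. i < r \<Longrightarrow> finite (set_pmf (p i))"
  shows "finite (set_pmf (input_dist r p))"
proof (rule finite_subset)
  show "set_pmf (input_dist r p) \<subseteq> PiE_dflt {..<r} undefined (set_pmf \<circ> p)"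
    unfolding input_dist_def by (rule set_Pi_pmf_subset') simp
  show "finite (PiE_dflt {..<r} undefined (set_pmf \<circ> p))"
    using assms by (intro finite_PiE_dflt) auto
qed

lemma adapted_round_cost:
  fixes c :: "nat \<Rightarrow> ('s \<times> 'q list) \<Rightarrow> 'o list \<Rightarrow> real" and D :: "'s \<Rightarrow> 'q list \<Rightarrow> 'o"
  shows "adapted (\<lambda>i x. round_cost c D x i)"
  unfolding adapted_def
proof (intro allI impI)
  fix i and x y :: "nat \<Rightarrow> 's \<times> 'q list"
  assume "\<forall>j\<le>i. x j = y j"
  then have "cat_rounds x (Suc i) = cat_rounds y (Suc i)"
    unfolding cat_rounds_def by (auto intro!: arg_cong[where f = concat] map_cong)
  then show "round_cost c D x i = round_cost c D y i" by (simp add: round_cost_def)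
qed

theorem theorem8:
  fixes valid :: "('s \<times> 'q list) \<Rightarrow> bool"
    and r :: nat
    and I :: "nat \<Rightarrow> ('s \<times> 'q list) set"
    and p :: "nat \<Rightarrow> ('s \<times> 'q list) pmf"
    and c :: "nat \<Rightarrow> ('s \<times> 'q list) \<Rightarrow> 'o list \<Rightarrow> real"
    and t s \<epsilon> :: real
    and b :: nat
    and ALG :: "bool list \<Rightarrow> 's \<Rightarrow> 'q list \<Rightarrow> 'o"
    and advice :: "('s \<times> 'q list) \<Rightarrow> bool list"
  assumes fin: "\<And>i. i < r \<Longrightarrow> finite (I i)"
    and supp: "\<And>i. i < r \<Longrightarrow> set_pmf (p i) \<subseteq> I i"
    and valid: "\<And>x. (\<forall>i<r. x i \<in> I i) \<Longrightarrow> valid (cat_rounds x r)"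
    and cost_nonneg: "\<And>i \<sigma> y. c i \<sigma> y \<ge> 0"
    and t_pos: "t > 0" and s_pos: "s > 0"
    and mean: "\<And>(D :: 's \<Rightarrow> 'q list \<Rightarrow> 'o) i w. i < r \<Longrightarrow>
        measure_pmf.prob (input_dist r p) {x. \<forall>j<i. x j = w j} > 0 \<Longrightarrow>
        measure_pmf.expectation (cond_pmf (input_dist r p) {x. \<forall>j<i. x j = w j})
          (\<lambda>x. round_cost c D x i) \<ge> t"
    and var: "\<And>(D :: 's \<Rightarrow> 'q list \<Rightarrow> 'o) i w. i < r \<Longrightarrow>
        measure_pmf.prob (input_dist r p) {x. \<forall>j<i. x j = w j} > 0 \<Longrightarrow>
        measure_pmf.expectation (cond_pmf (input_dist r p) {x. \<forall>j<i. x j = w j})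
          (\<lambda>x. (round_cost c D x i - t)\<^sup>2) \<le> s\<^sup>2"
    and advice_len: "\<And>\<sigma>. length (advice \<sigma>) = b"
    and eps_pos: "\<epsilon> > 0" and eps_le: "\<epsilon> \<le> t"
  shows "measure_pmf.prob (input_dist r p)
           {x. (\<Sum>i<r. round_cost c (ALG (advice (cat_rounds x r))) x i) \<le> (t - \<epsilon>) * real r}
         \<le> 2 powr (real b - K ((s\<^sup>2 / t\<^sup>2) / (1 + s\<^sup>2 / t\<^sup>2))
                               ((\<epsilon> / t + s\<^sup>2 / t\<^sup>2) / (1 + s\<^sup>2 / t\<^sup>2)) * real r)"
proof -
  let ?N = "input_dist r p"
  let ?bound = "2 powr (- K (s\<^sup>2 / (t\<^sup>2 + s\<^sup>2)) ((\<epsilon> * t + s\<^sup>2) / (t\<^sup>2 + s\<^sup>2)) * real r)"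
  have fin_N: "finite (set_pmf ?N)"
    using fin supp by (intro finite_set_pmf_input_dist) (auto intro: finite_subset)
  have deterministic: "measure_pmf.prob ?N {x. (\<Sum>i<r. round_cost c D x i) \<le> (t - \<epsilon>) * real r} \<le> ?bound"
    for D :: "'s \<Rightarrow> 'q list \<Rightarrow> 'o"
    using fin_N adapted_round_cost cost_nonneg t_pos s_pos eps_pos eps_le
      mean[OF _ measure_pmf_posI] var[OF _ measure_pmf_posI]
    by (intro prob_sum_adapted_le_powr_K) (auto simp: round_cost_def)
  have advice_strings: "finite {w :: bool list. length w = b}" "card {w :: bool list. length w = b} = 2 ^ b"
    using finite_lists_length_eq[of "UNIV :: bool set" b] card_lists_length_eq[of "UNIV :: bool set" b]
    by simp_all
  have "measure_pmf.prob ?N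
      {x. (\<Sum>i<r. round_cost c (ALG (advice (cat_rounds x r))) x i) \<le> (t - \<epsilon>) * real r}
    \<le> real (card {w :: bool list. length w = b}) * ?bound"
    using advice_len deterministic
    by (intro prob_chosen_event_le_card_mult[where choice = "\<lambda>x. advice (cat_rounds x r)"
          and P = "\<lambda>w x. (\<Sum>i<r. round_cost c (ALG w) x i) \<le> (t - \<epsilon>) * real r"])
      (auto simp: advice_strings)
  also have "\<dots> = 2 powr (real b - K (s\<^sup>2 / (t\<^sup>2 + s\<^sup>2)) ((\<epsilon> * t + s\<^sup>2) / (t\<^sup>2 + s\<^sup>2)) * real r)"
    by (simp add: advice_strings powr_diff powr_realpow divide_inverse powr_minus)
  also have "s\<^sup>2 / (t\<^sup>2 + s\<^sup>2) = (s\<^sup>2 / t\<^sup>2) / (1 + s\<^sup>2 / t\<^sup>2)"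
    using t_pos by (simp add: field_simps)
  also have "(\<epsilon> * t + s\<^sup>2) / (t\<^sup>2 + s\<^sup>2) = (\<epsilon> / t + s\<^sup>2 / t\<^sup>2) / (1 + s\<^sup>2 / t\<^sup>2)"
    using t_pos by (simp add: add_divide_distrib[symmetric] divide_simps power2_eq_square)
  finally show ?thesis .
qed

end
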